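(* If $X\ge0$ almost surely and $X$ is non-degenerate, then $X\notin\mathcal{D}^+$.
   Context: For real random variables, $X \le_{st} Y$ means $P(X\le t)\ge P(Y\le t)$ for all $t\in\mathbb{R}$. A real random variable $X$ (equivalently its distribution function $F_X$) belongs to $\mathcal{D}^+$ if for every $n\in\mathbb{N}$, all $\theta_1,\dots,\theta_n\ge 0$ with $\sum_{i=1}^n\theta_i=1$, and i.i.d. random variables $X_1,\dots,X_n$ with distribution $F_X$, we have $\sum_{i=1}^n\theta_iX_i\le_{st}X_1$. *)

theory Defs
  imports "HOL-Probability.Probability"
begin

definition st_le :: "real measure \<Rightarrow> real measure \<Rightarrow> bool" where
  "st_le \<mu> \<nu> \<longleftrightarrow> (\<forall>t::real. measure \<mu> {..t} \<ge> measure \<nu> {..t})"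

definition in_Dplus :: "real measure \<Rightarrow> bool" where
  "in_Dplus \<mu> \<longleftrightarrow>
     (\<forall>(n::nat) (\<theta>::nat \<Rightarrow> real). n \<ge> 1 \<longrightarrow> (\<forall>i<n. \<theta> i \<ge> 0) \<longrightarrow> (\<Sum>i<n. \<theta> i) = 1 \<longrightarrow>
        st_le (distr (PiM {..<n} (\<lambda>_. \<mu>)) borel (\<lambda>x. \<Sum>i<n. \<theta> i * x i)) \<mu>)"

end

theory Submission
  imports Defs
begin

(* Take n = 2, theta = (1/2, 1/2) and truncate at a level K. Since y \<mapsto> min y K is
   nondecreasing, the layer-cake formula E min(Y, K) = \<integral>[0,K] P(Y > s) ds turns
   (X1 + X2)/2 \<le>st X into E min((X1 + X2)/2, K) \<le> E min(X, K). Since it is also concave,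
   min(X1, K) + min(X2, K) \<le> 2 min((X1 + X2)/2, K) for X1, X2 \<ge> 0, strictly when X1 < K < X2.
   A non-degenerate X has a level K with P(X < K) > 0 and P(X > K) > 0 (otherwise X is
   concentrated at the supremum of the levels carrying no mass below them), so the strict
   inequality holds with positive probability, and integrating it gives the reverse strict
   inequality E min(X, K) < E min((X1 + X2)/2, K). *)

lemma ennreal_min_eq_nn_integral_indicator:
  fixes y K :: real
  shows "ennreal (min y K) = (\<integral>\<^sup>+s. indicator {0..K} s * indicator {s<..} y \<partial>lborel)"
proof -
  have "(\<integral>\<^sup>+s. indicator {0..K} s * indicator {s<..} y \<partial>lborel)
      = (\<integral>\<^sup>+s. indicator ({0..K} \<inter> {..<y}) s \<partial>lborel)"
    by (intro nn_integral_cong) (auto split: split_indicator)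
  also have "\<dots> = emeasure lborel ({0..K} \<inter> {..<y})"
    by simp
  also have "{0..K} \<inter> {..<y} = (if y \<le> 0 then {} else if y \<le> K then {0..<y} else {0..K})"
    by auto
  finally show ?thesis
    by (auto simp: emeasure_lborel_Icc_eq ennreal_neg min_def)
qed

lemma nn_integral_min_eq_tail_integral:
  fixes \<nu> :: "real measure" and K :: real
  assumes "sigma_finite_measure \<nu>" and sets_\<nu>: "sets \<nu> = sets borel"
  shows "(\<integral>\<^sup>+y. ennreal (min y K) \<partial>\<nu>)
       = (\<integral>\<^sup>+s. indicator {0..K} s * emeasure \<nu> {s<..} \<partial>lborel)"
proof -
  interpret \<nu>: sigma_finite_measure \<nu> by fact
  interpret pair_sigma_finite lborel \<nu> ..
  have [measurable]: "Measurable.pred (lborel \<Otimes>\<^sub>M borel) (\<lambda>x::real \<times> real. snd x \<in> {fst x<..})"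
    by (simp add: greaterThan_iff)
  have "(\<lambda>(s, y). indicator {0..K} s * indicator {s<..} y :: ennreal)
      \<in> borel_measurable (lborel \<Otimes>\<^sub>M \<nu>)"
    unfolding measurable_cong_sets[OF sets_pair_measure_cong[OF refl sets_\<nu>] refl] by measurable
  then have "(\<integral>\<^sup>+y. (\<integral>\<^sup>+s. indicator {0..K} s * indicator {s<..} y \<partial>lborel) \<partial>\<nu>)
      = (\<integral>\<^sup>+s. (\<integral>\<^sup>+y. indicator {0..K} s * indicator {s<..} y \<partial>\<nu>) \<partial>lborel)"
    by (rule Fubini')
  also have "\<dots> = (\<integral>\<^sup>+s. indicator {0..K} s * emeasure \<nu> {s<..} \<partial>lborel)"
    using sets_\<nu> by (intro nn_integral_cong nn_integral_cmult_indicator) auto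
  finally show ?thesis
    by (simp add: ennreal_min_eq_nn_integral_indicator)
qed

lemma st_le_imp_emeasure_greaterThan_le:
  fixes \<rho> \<nu> :: "real measure"
  assumes "prob_space \<rho>" "prob_space \<nu>" "sets \<rho> = sets borel" "sets \<nu> = sets borel"
    and "st_le \<rho> \<nu>"
  shows "emeasure \<rho> {s<..} \<le> emeasure \<nu> {s<..}"
proof -
  interpret \<rho>: prob_space \<rho> by fact
  interpret \<nu>: prob_space \<nu> by fact
  have "emeasure \<rho> {s<..} = 1 - measure \<rho> {..s}" "emeasure \<nu> {s<..} = 1 - measure \<nu> {..s}"
    using \<rho>.prob_compl[of "{..s}"] \<nu>.prob_compl[of "{..s}"] assms(3,4)
    by (simp_all add: \<rho>.emeasure_eq_measure \<nu>.emeasure_eq_measure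
        sets_eq_imp_space_eq[of _ borel] Compl_eq_Diff_UNIV[symmetric])
  then show ?thesis
    using \<open>st_le \<rho> \<nu>\<close> by (auto simp: st_le_def intro!: ennreal_leI)
qed

lemma st_le_imp_nn_integral_min_le:
  fixes \<rho> \<nu> :: "real measure"
  assumes "prob_space \<rho>" "prob_space \<nu>" "sets \<rho> = sets borel" "sets \<nu> = sets borel"
    and "st_le \<rho> \<nu>"
  shows "(\<integral>\<^sup>+y. ennreal (min y K) \<partial>\<rho>) \<le> (\<integral>\<^sup>+y. ennreal (min y K) \<partial>\<nu>)"
  using assms
  by (simp add: nn_integral_min_eq_tail_integral prob_space_imp_sigma_finite
        nn_integral_mono mult_left_mono st_le_imp_emeasure_greaterThan_le)

lemma AE_eq_const_if_no_split:
  fixes \<nu> :: "real measure"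
  assumes sets_\<nu>: "sets \<nu> = sets borel"
    and no_split: "\<And>K. emeasure \<nu> {..<K} = 0 \<or> emeasure \<nu> {K<..} = 0"
  shows "\<exists>c. AE y in \<nu>. y = c"
proof -
  have [simp]: "A \<in> sets \<nu>" if "A \<in> sets borel" for A
    using that sets_\<nu> by simp
  have null_UN_Rats: "(\<Union>q\<in>{q\<in>\<rat>. P q}. A q) \<in> null_sets \<nu>"
    if "\<And>q. q \<in> \<rat> \<Longrightarrow> P q \<Longrightarrow> A q \<in> null_sets \<nu>" for P and A :: "real \<Rightarrow> real set"
    using that by (intro null_sets_UN' countable_subset[OF _ countable_rat]) auto
  have below: "{..<c} = (\<Union>q\<in>{q\<in>\<rat>. q < c}. {..<q})" for c :: real
    by (auto dest: Rats_dense_in_real)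
  have above: "{c<..} = (\<Union>q\<in>{q\<in>\<rat>. c < q}. {q<..})" for c :: real
    by (auto dest: Rats_dense_in_real)
  have UNIV_null: "AE y in \<nu>. y = c" if "UNIV \<in> null_sets \<nu>" for c
    using that by (rule AE_I') simp
  define T where "T = {K. emeasure \<nu> {..<K} = 0}"
  have T_down: "t \<in> T" if "t \<le> t'" "t' \<in> T" for t t'
    using that emeasure_mono[of "{..<t}" "{..<t'}" \<nu>] by (auto simp: T_def)
  have not_T: "{q<..} \<in> null_sets \<nu>" if "q \<notin> T" for q
    using that no_split[of q] by (auto simp: T_def)
  consider "T = {}" | "\<not> bdd_above T" | "T \<noteq> {}" "bdd_above T"
    by blast
  then show ?thesis
  proof cases
    case 1
    have "UNIV = (\<Union>q\<in>{q\<in>\<rat>. True}. {q<..} :: real set)"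
      using Rats_no_bot_less by auto
    also have "\<dots> \<in> null_sets \<nu>"
      using 1 by (intro null_UN_Rats not_T) auto
    finally show ?thesis
      by (blast intro: UNIV_null)
  next
    case 2
    have "q \<in> T" for q
      using 2 T_down by (meson bdd_above.I linorder_not_le order_less_imp_le)
    have "UNIV = (\<Union>q\<in>{q\<in>\<rat>. True}. {..<q} :: real set)"
      using Rats_dense_in_real[OF less_add_one] by blast
    also have "\<dots> \<in> null_sets \<nu>"
      using \<open>\<And>q. q \<in> T\<close> by (intro null_UN_Rats) (auto simp: T_def)
    finally show ?thesis
      by (blast intro: UNIV_null)
  next
    case 3
    define c where "c = Sup T"
    have "{..<c} \<in> null_sets \<nu>"
    proof (subst below, rule null_UN_Rats)
      fix q assume "q < c"
      then obtain t where "t \<in> T" "q < t"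
        using less_cSup_iff[OF 3] by (auto simp: c_def)
      then show "{..<q} \<in> null_sets \<nu>"
        using T_down[of q t] by (auto simp: T_def)
    qed
    moreover have "{c<..} \<in> null_sets \<nu>"
    proof (subst above, rule null_UN_Rats)
      fix q assume "c < q"
      then have "q \<notin> T"
        using cSup_upper[OF _ 3(2)] by (force simp: c_def)
      then show "{q<..} \<in> null_sets \<nu>"
        by (rule not_T)
    qed
    ultimately have "{..<c} \<union> {c<..} \<in> null_sets \<nu>"
      by blast
    then have "AE y in \<nu>. y = c"
      by (rule AE_I') auto
    then show ?thesis ..
  qed
qed

lemma ennreal_min_add_le_midpoint:
  fixes a b K :: real
  assumes "0 \<le> a" "0 \<le> b"
  shows "ennreal (min a K) + ennreal (min b K) \<le> 2 * ennreal (min (1/2 * a + 1/2 * b) K)"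
proof (cases "0 \<le> K")
  case True
  with assms have "ennreal (min a K) + ennreal (min b K) = ennreal (min a K + min b K)"
    by (simp add: ennreal_plus)
  also have "\<dots> \<le> ennreal (2 * min (1/2 * a + 1/2 * b) K)"
    by (rule ennreal_leI) (auto simp: min_def)
  also have "\<dots> = 2 * ennreal (min (1/2 * a + 1/2 * b) K)"
    using True assms by (simp add: ennreal_mult)
  finally show ?thesis .
qed (simp add: ennreal_neg)

lemma ennreal_min_add_less_midpoint:
  fixes a b K :: real
  assumes "0 \<le> a" "a < K" "K < b"
  shows "ennreal (min a K) + ennreal (min b K) < 2 * ennreal (min (1/2 * a + 1/2 * b) K)"
proof -
  have "ennreal (min a K) + ennreal (min b K) = ennreal (min a K + min b K)"
    using assms by (simp add: ennreal_plus)
  also have "\<dots> < ennreal (2 * min (1/2 * a + 1/2 * b) K)"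
    using assms by (subst ennreal_less_iff) (auto simp: min_def)
  also have "\<dots> = 2 * ennreal (min (1/2 * a + 1/2 * b) K)"
    using assms by (simp add: ennreal_mult)
  finally show ?thesis .
qed

lemma nn_integral_min_add_less_midpoint:
  fixes U V :: "'a \<Rightarrow> real" and K :: real
  assumes [measurable]: "U \<in> borel_measurable M" "V \<in> borel_measurable M"
    and nonneg: "AE \<omega> in M. 0 \<le> U \<omega> \<and> 0 \<le> V \<omega>"
    and split_pos: "emeasure M {\<omega> \<in> space M. U \<omega> < K \<and> K < V \<omega>} \<noteq> 0"
    and finite: "(\<integral>\<^sup>+\<omega>. ennreal (min (U \<omega>) K) + ennreal (min (V \<omega>) K) \<partial>M) \<noteq> \<infinity>"
  shows "(\<integral>\<^sup>+\<omega>. ennreal (min (U \<omega>) K) + ennreal (min (V \<omega>) K) \<partial>M)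
       < (\<integral>\<^sup>+\<omega>. 2 * ennreal (min (1/2 * U \<omega> + 1/2 * V \<omega>) K) \<partial>M)"
proof (rule nn_integral_less)
  show "AE \<omega> in M. ennreal (min (U \<omega>) K) + ennreal (min (V \<omega>) K)
      \<le> 2 * ennreal (min (1/2 * U \<omega> + 1/2 * V \<omega>) K)"
    using nonneg by eventually_elim (intro ennreal_min_add_le_midpoint; simp)
  show "\<not> (AE \<omega> in M. 2 * ennreal (min (1/2 * U \<omega> + 1/2 * V \<omega>) K)
      \<le> ennreal (min (U \<omega>) K) + ennreal (min (V \<omega>) K))"
  proof
    assume "AE \<omega> in M. 2 * ennreal (min (1/2 * U \<omega> + 1/2 * V \<omega>) K)
      \<le> ennreal (min (U \<omega>) K) + ennreal (min (V \<omega>) K)"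
    with nonneg have "AE \<omega> in M. \<not> (U \<omega> < K \<and> K < V \<omega>)"
    proof eventually_elim
      case (elim \<omega>)
      then show ?case
        using ennreal_min_add_less_midpoint[of "U \<omega>" K "V \<omega>"] by (meson leD)
    qed
    from split_pos emeasure_eq_0_AE[OF this] show False
      by (rule notE)
  qed
qed (use finite in measurable)

lemma measurable_PiM_weighted_sum:
  fixes \<nu> :: "real measure"
  assumes "sets \<nu> = sets borel"
  shows "(\<lambda>x. \<Sum>i\<in>I. \<theta> i * x i) \<in> borel_measurable (PiM I (\<lambda>_. \<nu>))"
  unfolding measurable_cong_sets[OF sets_PiM_cong[OF refl assms] refl] by measurable

lemma nn_integral_PiM_component:
  fixes f :: "'b \<Rightarrow> ennreal"
  assumes "prob_space \<nu>" "i \<in> I" "f \<in> borel_measurable \<nu>"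
  shows "(\<integral>\<^sup>+x. f (x i) \<partial>PiM I (\<lambda>_. \<nu>)) = (\<integral>\<^sup>+y. f y \<partial>\<nu>)"
  using nn_integral_distr[OF measurable_component_singleton[OF assms(2)], of f \<open>\<lambda>_. \<nu>\<close>]
    distr_PiM_component[of I \<open>\<lambda>_. \<nu>\<close> i] assms
  by simp

lemma emeasure_PiM_two_components:
  assumes "prob_space \<nu>" "A \<in> sets \<nu>" "B \<in> sets \<nu>"
  shows "emeasure (PiM {..<2::nat} (\<lambda>_. \<nu>)) {x \<in> space (PiM {..<2::nat} (\<lambda>_. \<nu>)). x 0 \<in> A \<and> x 1 \<in> B}
       = emeasure \<nu> A * emeasure \<nu> B"
proof -
  interpret \<nu>: prob_space \<nu> by fact
  interpret product_prob_space "\<lambda>_. \<nu>" "{..<2::nat}" ..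
  let ?AB = "\<lambda>i::nat. if i = 0 then A else B"
  have "{x \<in> space (PiM {..<2} (\<lambda>_. \<nu>)). x 0 \<in> A \<and> x 1 \<in> B}
      = {x \<in> space (PiM {..<2} (\<lambda>_. \<nu>)). \<forall>i\<in>{0, 1}. x i \<in> ?AB i}"
    by auto
  also have "emeasure (PiM {..<2} (\<lambda>_. \<nu>)) \<dots> = (\<Prod>i\<in>{0, 1}. emeasure \<nu> (?AB i))"
    using assms by (intro emeasure_PiM_Collect) auto
  finally show ?thesis
    by simp
qed

lemma nn_integral_min_less_iid_midpoint:
  fixes \<nu> :: "real measure" and K :: real
  assumes prob_\<nu>: "prob_space \<nu>" and sets_\<nu>: "sets \<nu> = sets borel"
    and nonneg: "AE y in \<nu>. 0 \<le> y"
    and below: "emeasure \<nu> {..<K} \<noteq> 0" and above: "emeasure \<nu> {K<..} \<noteq> 0"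
  shows "(\<integral>\<^sup>+y. ennreal (min y K) \<partial>\<nu>)
       < (\<integral>\<^sup>+y. ennreal (min y K) \<partial>distr (PiM {..<2::nat} (\<lambda>_. \<nu>)) borel (\<lambda>x. \<Sum>i<2. 1/2 * x i))"
proof -
  interpret \<nu>: prob_space \<nu> by fact
  define N where "N = PiM {..<2::nat} (\<lambda>_. \<nu>)"
  define S where "S = (\<lambda>x::nat \<Rightarrow> real. \<Sum>i<2. 1/2 * x i)"
  define g where "g y = ennreal (min y K)" for y
  have [measurable]: "g \<in> borel_measurable borel"
    unfolding g_def by measurable
  have g_\<nu>: "g \<in> borel_measurable \<nu>"
    unfolding measurable_cong_sets[OF sets_\<nu> refl] by measurable
  have coord_\<nu>: "(\<lambda>x. x i) \<in> measurable N \<nu>" if "i < 2" for i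
    unfolding N_def using that by (intro measurable_component_singleton) auto
  then have coord_borel[measurable]: "(\<lambda>x. x 0) \<in> borel_measurable N" "(\<lambda>x. x 1) \<in> borel_measurable N"
    using measurable_cong_sets[OF refl sets_\<nu>, of N] by simp_all
  have [measurable]: "S \<in> borel_measurable N"
    unfolding S_def N_def using sets_\<nu> by (rule measurable_PiM_weighted_sum)
  have "AE x in N. 0 \<le> x i" if "i < 2" for i
  proof (rule AE_distrD[OF coord_\<nu>[OF that]])
    show "AE y in distr N \<nu> (\<lambda>x. x i). 0 \<le> y"
      unfolding N_def using that prob_\<nu> nonneg by (subst distr_PiM_component) auto
  qed
  then have nonneg_N: "AE x in N. 0 \<le> x 0 \<and> 0 \<le> x 1"
    by (auto simp: AE_conj_iff)
  have "emeasure N {x \<in> space N. x 0 < K \<and> K < x 1} = emeasure \<nu> {..<K} * emeasure \<nu> {K<..}"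
    using emeasure_PiM_two_components[OF prob_\<nu>, of "{..<K}" "{K<..}"] sets_\<nu>
    by (simp add: N_def)
  with below above have split_pos: "emeasure N {x \<in> space N. x 0 < K \<and> K < x 1} \<noteq> 0"
    by simp
  have "(\<integral>\<^sup>+x. g (x 0) + g (x 1) \<partial>N) = (\<integral>\<^sup>+x. g (x 0) \<partial>N) + (\<integral>\<^sup>+x. g (x 1) \<partial>N)"
    by (rule nn_integral_add) measurable
  also have "\<dots> = 2 * (\<integral>\<^sup>+y. g y \<partial>\<nu>)"
    unfolding N_def using nn_integral_PiM_component[OF prob_\<nu> _ g_\<nu>, of _ "{..<2::nat}"]
    by (simp add: mult_2)
  finally have sum_coord: "(\<integral>\<^sup>+x. g (x 0) + g (x 1) \<partial>N) = 2 * (\<integral>\<^sup>+y. g y \<partial>\<nu>)" .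
  have "(\<integral>\<^sup>+y. g y \<partial>\<nu>) \<le> (\<integral>\<^sup>+y. ennreal K \<partial>\<nu>)"
    by (intro nn_integral_mono) (simp add: g_def ennreal_leI)
  then have finite: "(\<integral>\<^sup>+x. g (x 0) + g (x 1) \<partial>N) \<noteq> \<infinity>"
    unfolding sum_coord using \<nu>.emeasure_space_1 by (auto simp: ennreal_mult_eq_top_iff top_unique)
  have S_eq: "S x = 1/2 * x 0 + 1/2 * x 1" for x
    by (simp add: S_def numeral_2_eq_2)
  have "2 * (\<integral>\<^sup>+y. g y \<partial>\<nu>) = (\<integral>\<^sup>+x. g (x 0) + g (x 1) \<partial>N)"
    by (rule sum_coord[symmetric])
  also have "\<dots> < (\<integral>\<^sup>+x. 2 * g (S x) \<partial>N)"
    unfolding g_def S_eq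
    by (rule nn_integral_min_add_less_midpoint[OF coord_borel nonneg_N split_pos finite[unfolded g_def]])
  also have "\<dots> = 2 * (\<integral>\<^sup>+y. g y \<partial>distr N borel S)"
    by (simp add: nn_integral_cmult nn_integral_distr)
  finally have "(\<integral>\<^sup>+y. g y \<partial>\<nu>) < (\<integral>\<^sup>+y. g y \<partial>distr N borel S)"
    using mult_left_mono[of _ _ "2 :: ennreal"] by (meson linorder_not_less zero_le)
  then show ?thesis
    by (simp add: g_def N_def S_def)
qed

theorem mainTheorem10:
  fixes M :: "'a measure" and X :: "'a \<Rightarrow> real"
  assumes "prob_space M"
    and "X \<in> borel_measurable M"
    and "AE \<omega> in M. X \<omega> \<ge> 0"
    and "\<not> (\<exists>c. AE \<omega> in M. X \<omega> = c)"
  shows "\<not> in_Dplus (distr M borel X)"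
proof
  assume Dplus: "in_Dplus (distr M borel X)"
  interpret M: prob_space M by fact
  define \<nu> where "\<nu> = distr M borel X"
  have prob_\<nu>: "prob_space \<nu>" and sets_\<nu>: "sets \<nu> = sets borel"
    unfolding \<nu>_def using assms(2) by (auto intro: M.prob_space_distr)
  have nonneg: "AE y in \<nu>. 0 \<le> y"
    unfolding \<nu>_def using assms(2,3) by (simp add: AE_distr_iff)
  have "\<not> (\<exists>c. AE y in \<nu>. y = c)"
    unfolding \<nu>_def using assms(2,4) by (simp add: AE_distr_iff)
  then obtain K where below: "emeasure \<nu> {..<K} \<noteq> 0" and above: "emeasure \<nu> {K<..} \<noteq> 0"
    using AE_eq_const_if_no_split[OF sets_\<nu>] by blast
  define \<rho> where "\<rho> = distr (PiM {..<2::nat} (\<lambda>_. \<nu>)) borel (\<lambda>x. \<Sum>i<2. 1/2 * x i)"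
  have "st_le \<rho> \<nu>"
    using Dplus[unfolded in_Dplus_def, rule_format, of 2 "\<lambda>_. 1/2"] by (simp add: \<rho>_def \<nu>_def)
  moreover have "prob_space \<rho>"
    unfolding \<rho>_def using prob_\<nu> sets_\<nu>
    by (intro prob_space.prob_space_distr prob_space_PiM measurable_PiM_weighted_sum)
  ultimately have "(\<integral>\<^sup>+y. ennreal (min y K) \<partial>\<rho>) \<le> (\<integral>\<^sup>+y. ennreal (min y K) \<partial>\<nu>)"
    using prob_\<nu> sets_\<nu> by (intro st_le_imp_nn_integral_min_le) (auto simp: \<rho>_def)
  with nn_integral_min_less_iid_midpoint[OF prob_\<nu> sets_\<nu> nonneg below above] show False
    by (simp add: \<rho>_def)
qed

end
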